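(* Let $X$ be a spectrally extremal regular graph on $n$ vertices of diameter $d$, with distinct eigenvalues $\theta_0 > \dots > \theta_d$. If the eccentricity of every vertex is $d$ and \[ n \prod_{s=1}^{d} \frac{1}{\theta_0 - \theta_s} = \sum_{r=0}^{d} (-1)^r \prod_{s \neq r} \frac{1}{\theta_r - \theta_s}, \] then $X$ is an antipodal distance-regular graph.
   Context: $X$ is a finite simple connected graph. A graph of diameter $d$ has at least $d+1$ distinct adjacency eigenvalues; it is spectrally extremal if it has exactly $d+1$. The eccentricity of a vertex $u$ is $\max_w d(u,w)$. A partition of $V(X)$ is equitable if the number of neighbours that a vertex $x$ has in a class $C$ depends only on the class containing $x$; these numbers are the parameters of the partition. The distance partition of $u$ is the partition into the sets $\{w : d(u,w)=i\}$. $X$ is distance-regular if the distance partition of every vertex is equitable with parameters independent of the vertex. A distance-regular graph of diameter $d$ is antipodal if the relation "being at distance $0$ or $d$" is an equivalence relation on $V(X)$. *)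

theory Defs
  imports Complex_Main
begin

definition simple_graph :: "'a set \<Rightarrow> ('a \<Rightarrow> 'a \<Rightarrow> bool) \<Rightarrow> bool" where
  "simple_graph V E \<longleftrightarrow> finite V \<and> V \<noteq> {} \<and>
     (\<forall>x y. E x y \<longrightarrow> x \<in> V \<and> y \<in> V) \<and>
     (\<forall>x y. E x y \<longrightarrow> E y x) \<and> (\<forall>x. \<not> E x x)"

definition edge_rel :: "'a set \<Rightarrow> ('a \<Rightarrow> 'a \<Rightarrow> bool) \<Rightarrow> ('a \<times> 'a) set" where
  "edge_rel V E = {(x, y). x \<in> V \<and> y \<in> V \<and> E x y}"

definition connected_graph :: "'a set \<Rightarrow> ('a \<Rightarrow> 'a \<Rightarrow> bool) \<Rightarrow> bool" where
  "connected_graph V E \<longleftrightarrow> (\<forall>u\<in>V. \<forall>w\<in>V. (u, w) \<in> (edge_rel V E)\<^sup>*)"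

definition gdist :: "'a set \<Rightarrow> ('a \<Rightarrow> 'a \<Rightarrow> bool) \<Rightarrow> 'a \<Rightarrow> 'a \<Rightarrow> nat" where
  "gdist V E u w = (LEAST n. (u, w) \<in> (edge_rel V E) ^^ n)"

definition eccentricity :: "'a set \<Rightarrow> ('a \<Rightarrow> 'a \<Rightarrow> bool) \<Rightarrow> 'a \<Rightarrow> nat" where
  "eccentricity V E u = Max {gdist V E u w | w. w \<in> V}"

definition diameter :: "'a set \<Rightarrow> ('a \<Rightarrow> 'a \<Rightarrow> bool) \<Rightarrow> nat" where
  "diameter V E = Max {gdist V E u w | u w. u \<in> V \<and> w \<in> V}"

definition regular_graph :: "'a set \<Rightarrow> ('a \<Rightarrow> 'a \<Rightarrow> bool) \<Rightarrow> bool" where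
  "regular_graph V E \<longleftrightarrow> (\<exists>k. \<forall>x\<in>V. card {y \<in> V. E x y} = k)"

text \<open>Adjacency eigenvalues: \<theta> with A f = \<theta> f for some nonzero f : V \<rightarrow> \<real>.
  (The adjacency matrix is real symmetric, so all eigenvalues are real.)\<close>
definition adj_eigenvalues :: "'a set \<Rightarrow> ('a \<Rightarrow> 'a \<Rightarrow> bool) \<Rightarrow> real set" where
  "adj_eigenvalues V E = {\<theta>. \<exists>f :: 'a \<Rightarrow> real. (\<exists>x\<in>V. f x \<noteq> 0) \<and>
       (\<forall>x\<in>V. (\<Sum>y\<in>{y \<in> V. E x y}. f y) = \<theta> * f x)}"

definition spectrally_extremal :: "'a set \<Rightarrow> ('a \<Rightarrow> 'a \<Rightarrow> bool) \<Rightarrow> bool" where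
  "spectrally_extremal V E \<longleftrightarrow> card (adj_eigenvalues V E) = diameter V E + 1"

definition distance_regular :: "'a set \<Rightarrow> ('a \<Rightarrow> 'a \<Rightarrow> bool) \<Rightarrow> bool" where
  "distance_regular V E \<longleftrightarrow> (\<exists>p :: nat \<Rightarrow> nat \<Rightarrow> nat. \<forall>u\<in>V. \<forall>x\<in>V. \<forall>j.
      card {y \<in> V. E x y \<and> gdist V E u y = j} = p (gdist V E u x) j)"

definition antipodal_drg :: "'a set \<Rightarrow> ('a \<Rightarrow> 'a \<Rightarrow> bool) \<Rightarrow> bool" where
  "antipodal_drg V E \<longleftrightarrow> distance_regular V E \<and>
     equiv V {(x, y). x \<in> V \<and> y \<in> V \<and>
                      (gdist V E x y = 0 \<or> gdist V E x y = diameter V E)}"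

end

theory Submission
  imports Defs "HOL-Computational_Algebra.Fundamental_Theorem_Algebra" "HOL-Library.Function_Algebras"
begin

text \<open>
  Write \<open>p(A)\<close> for a polynomial in the adjacency operator \<open>A\<close>. As \<open>A\<close> is self-adjoint, it is
  annihilated by \<open>\<Prod>\<^sub>r (X - \<theta>\<^sub>r)\<close>, so \<open>p(A)\<close> only depends on the values \<open>p(\<theta>\<^sub>r)\<close>. Regularity and
  connectivity make the Hoffman polynomial \<open>H\<close> satisfy \<open>H(A) = J\<close>. Let \<open>q\<close> interpolate \<open>(-1)\<^sup>r\<close> at
  \<open>\<theta>\<^sub>r\<close>, so that \<open>q(A)\<^sup>2 = I\<close>. The hypothesis on \<open>n\<close> says that \<open>q\<close> and \<open>H\<close> have the same leading
  coefficient; since entries of \<open>p(A)\<close> at distance \<open>d\<close> only see the coefficient of \<open>X\<^sup>d\<close>, \<open>q(A)\<close> has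
  entry \<open>1\<close> at every pair at distance \<open>d\<close>. Its rows have norm \<open>1\<close> and every vertex has eccentricity
  \<open>d\<close>, so every vertex has exactly one vertex at distance \<open>d\<close>, and \<open>q(A) = A\<^sub>d\<close>. Starting from \<open>A\<^sub>d\<close>,
  \<open>A\<^sub>d\<^sub>+\<^sub>1 = 0\<close> and \<open>A\<^sub>0 + \<dots> + A\<^sub>d = H(A)\<close>, the three-term recurrence of the distance matrices
  expresses every \<open>A\<^sub>i\<close> as a polynomial of degree \<open>i\<close> in \<open>A\<close>. Hence the algebra generated by \<open>A\<close> is
  spanned by the \<open>A\<^sub>i\<close>, which is distance-regularity, and the unique antipodes make it antipodal.
\<close>

lemma sum_fun_apply: "(\<Sum>a\<in>A. f a) x = (\<Sum>a\<in>A. f a x)"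
  by (induction A rule: infinite_finite_induct) auto

lemma finite_exists_max:
  fixes g :: "'a \<Rightarrow> 'b::linorder"
  assumes "finite S" and "S \<noteq> {}"
  obtains x where "x \<in> S" and "\<forall>y\<in>S. g y \<le> g x"
proof -
  have "Max (g ` S) \<in> g ` S"
    using assms by (intro Max_in) auto
  then obtain x where "x \<in> S" "g x = Max (g ` S)"
    by auto
  moreover have "\<forall>y\<in>S. g y \<le> Max (g ` S)"
    using assms by simp
  ultimately show thesis
    using that by simp
qed

lemma prod_linear_factors_dvd:
  fixes p :: "'a::idom poly"
  assumes "finite S" and "\<forall>s\<in>S. poly p s = 0"
  shows "(\<Prod>s\<in>S. [:-s, 1:]) dvd p"
  using assms
proof (induction S arbitrary: p rule: finite_induct)
  case (insert a S)
  have "poly p a = 0"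
    using insert.prems by simp
  then obtain q where q: "p = [:-a, 1:] * q"
    by (metis dvdE poly_eq_0_iff_dvd)
  have "poly q s = 0" if "s \<in> S" for s
  proof -
    have "poly p s = 0" "s \<noteq> a"
      using insert.prems insert.hyps(2) that by auto
    then show ?thesis by (simp add: q)
  qed
  then have "(\<Prod>s\<in>S. [:-s, 1:]) dvd q"
    using insert.IH by blast
  then show ?case
    unfolding prod.insert[OF insert.hyps] q by (rule mult_dvd_mono[OF dvd_refl])
qed simp

lemma degree_le_if_coeff_Suc_eq_0:
  "degree p \<le> Suc i \<Longrightarrow> coeff p (Suc i) = 0 \<Longrightarrow> degree p \<le> i"
  using leading_coeff_0_iff[of p] by (cases "degree p = Suc i") (auto simp: le_Suc_eq)

lemma degree_prod_linear: "degree (\<Prod>s\<in>S. [:-t s, 1:] :: 'a::idom poly) = card S"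
  by (subst degree_prod_eq_sum_degree) auto

lemma coeff_prod_linear: "coeff (\<Prod>s\<in>S. [:-t s, 1:] :: 'a::idom poly) (card S) = 1"
  using lead_coeff_prod[of "\<lambda>s. [:-t s, 1:]" S] degree_prod_linear[of t S] by simp

section \<open>Real polynomials have a real factor of degree one or two\<close>

definition cpoly :: "real poly \<Rightarrow> complex \<Rightarrow> complex" where
  "cpoly p = poly (map_poly complex_of_real p)"

lemma cpoly_pCons: "cpoly (pCons a p) z = of_real a + z * cpoly p z"
  by (simp add: cpoly_def map_poly_pCons)

lemma cpoly_0 [simp]: "cpoly 0 z = 0"
  by (simp add: cpoly_def)

lemma cpoly_add: "cpoly (p + q) z = cpoly p z + cpoly q z"
proof -
  have "map_poly complex_of_real (p + q) = map_poly complex_of_real p + map_poly complex_of_real q"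
    by (intro poly_eqI) (simp add: coeff_map_poly)
  then show ?thesis by (simp add: cpoly_def)
qed

lemma cpoly_smult: "cpoly (smult c p) z = of_real c * cpoly p z"
  by (simp add: cpoly_def map_poly_smult)

lemma cpoly_mult: "cpoly (p * q) z = cpoly p z * cpoly q z"
proof (induction p)
  case (pCons a p)
  have "pCons a p * q = smult a q + pCons 0 (p * q)" by simp
  with pCons.IH show ?case
    by (simp add: cpoly_add cpoly_pCons cpoly_smult algebra_simps)
qed simp

lemma cpoly_of_real: "cpoly p (of_real x) = of_real (poly p x)"
  by (induction p) (simp_all add: cpoly_pCons)

lemma cpoly_cnj: "cpoly p (cnj z) = cnj (cpoly p z)"
  by (induction p) (simp_all add: cpoly_pCons)

lemma real_poly_linear_or_quadratic_factor:
  fixes p :: "real poly"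
  assumes "degree p > 0"
  obtains a q where "p = [:-a, 1:] * q"
        | a b q where "b \<noteq> 0" "p = [:a\<^sup>2 + b\<^sup>2, -2*a, 1:] * q"
proof -
  have "degree (map_poly complex_of_real p) > 0"
    using assms by (simp add: degree_map_poly)
  then obtain z where z: "cpoly p z = 0"
    unfolding cpoly_def using fundamental_theorem_of_algebra_alt
    by (metis degree_pCons_0 gr_implies_not0)
  show thesis
  proof (cases "Im z = 0")
    case True
    then have "poly p (Re z) = 0"
      using z cpoly_of_real[of p "Re z"] by (simp add: complex_is_Real_iff)
    then show thesis using that(1) by (metis dvdE poly_eq_0_iff_dvd)
  next
    case False
    define a b where "a = Re z" and "b = Im z"
    define Q where "Q = [:a\<^sup>2 + b\<^sup>2, -2*a, 1:]"
    have Q_roots: "cpoly Q z = 0" "cpoly Q (cnj z) = 0"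
      by (simp_all add: Q_def cpoly_pCons cpoly_cnj a_def b_def complex_eq_iff
          power2_eq_square algebra_simps)
    \<comment> \<open>The remainder of p modulo Q is a real polynomial of degree at most one
        vanishing at the non-real point z, hence zero.\<close>
    define r where "r = p mod Q"
    have p_div_mod: "p = p div Q * Q + r" by (simp add: r_def)
    then have r_roots: "cpoly r z = 0" "cpoly r (cnj z) = 0"
      using z Q_roots by (metis add_0 cpoly_add cpoly_cnj cpoly_mult mult_zero_right)+
    have "degree r \<le> 1"
      using degree_mod_less[of Q p] by (auto simp: Q_def r_def)
    then have r_linear: "r = [:coeff r 0, coeff r 1:]"
      by (intro poly_eqI) (auto simp: coeff_pCons coeff_eq_0 split: nat.splits)
    then have "of_real (coeff r 0) + z * of_real (coeff r 1) = 0"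
      using r_roots(1) by (metis cpoly_pCons cpoly_def map_poly_0 mult_zero_right poly_0 add_0_right)
    then have "coeff r 1 = 0" "coeff r 0 = 0"
      using False by (auto simp: complex_eq_iff)
    with r_linear have "p = Q * (p div Q)"
      by (metis p_div_mod add_0_right mult.commute pCons_0_0)
    then show thesis using that(2) False by (simp add: Q_def b_def a_def)
  qed
qed

section \<open>The adjacency operator of a finite simple graph\<close>

interpretation fun_vs: vector_space "\<lambda>(c::real) (g::'a \<Rightarrow> real) x. c * g x"
  by unfold_locales (auto simp: algebra_simps fun_eq_iff)

locale sgraph =
  fixes V :: "'a set" and E :: "'a \<Rightarrow> 'a \<Rightarrow> bool"
  assumes simple: "simple_graph V E"
begin

lemma finite_V: "finite V" and V_nonempty: "V \<noteq> {}"
  using simple by (simp_all add: simple_graph_def)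

lemma edge_in_V: "E x y \<Longrightarrow> x \<in> V \<and> y \<in> V"
  using simple by (simp add: simple_graph_def)

lemma edge_sym: "E x y \<Longrightarrow> E y x"
  using simple by (simp add: simple_graph_def)

lemma edge_rel_iff: "(x, y) \<in> edge_rel V E \<longleftrightarrow> E x y"
  using edge_in_V by (auto simp: edge_rel_def)

definition nbrs :: "'a \<Rightarrow> 'a set" where
  "nbrs x = {y \<in> V. E x y}"

lemma finite_nbrs [simp]: "finite (nbrs x)"
  using finite_V by (simp add: nbrs_def)

lemma nbrs_subset_V: "nbrs x \<subseteq> V"
  by (auto simp: nbrs_def)

lemma nbrs_outside: "x \<notin> V \<Longrightarrow> nbrs x = {}"
  using edge_in_V by (auto simp: nbrs_def)

definition adj :: "('a \<Rightarrow> real) \<Rightarrow> 'a \<Rightarrow> real" where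
  "adj f x = (\<Sum>y\<in>nbrs x. f y)"

lemma adj_add [simp]: "adj (\<lambda>x. f x + g x) = (\<lambda>x. adj f x + adj g x)"
  and adj_scale [simp]: "adj (\<lambda>x. c * f x) = (\<lambda>x. c * adj f x)"
  and adj_zero [simp]: "adj (\<lambda>x. 0) = (\<lambda>x. 0)"
  by (simp_all add: adj_def fun_eq_iff sum.distrib sum_distrib_left)

lemma adj_outside: "x \<notin> V \<Longrightarrow> adj f x = 0"
  by (simp add: adj_def nbrs_outside)

lemma eigenvalue_iff_adj:
  "t \<in> adj_eigenvalues V E \<longleftrightarrow> (\<exists>f. (\<exists>x\<in>V. f x \<noteq> 0) \<and> (\<forall>x\<in>V. adj f x = t * f x))"
  by (simp add: adj_eigenvalues_def adj_def nbrs_def)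

definition poly_adj :: "real poly \<Rightarrow> ('a \<Rightarrow> real) \<Rightarrow> 'a \<Rightarrow> real" where
  "poly_adj p f x = (\<Sum>k\<le>degree p. coeff p k * (adj ^^ k) f x)"

lemma poly_adj_upto:
  "degree p \<le> N \<Longrightarrow> poly_adj p f x = (\<Sum>k\<le>N. coeff p k * (adj ^^ k) f x)"
  unfolding poly_adj_def by (rule sum.mono_neutral_left) (auto simp: coeff_eq_0)

lemma poly_adj_0 [simp]: "poly_adj 0 f = (\<lambda>x. 0)"
  by (simp add: poly_adj_def fun_eq_iff)

lemma poly_adj_pCons: "poly_adj (pCons a p) f = (\<lambda>x. a * f x + adj (poly_adj p f) x)"
proof
  fix x
  have "poly_adj (pCons a p) f x = (\<Sum>k\<le>Suc (degree p). coeff (pCons a p) k * (adj ^^ k) f x)"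
    by (rule poly_adj_upto) (simp add: degree_pCons_le)
  also have "\<dots> = a * f x + (\<Sum>k\<le>degree p. coeff p k * (adj ^^ Suc k) f x)"
    by (subst sum.atMost_Suc_shift) simp
  also have "(\<Sum>k\<le>degree p. coeff p k * (adj ^^ Suc k) f x) = adj (poly_adj p f) x"
    by (simp add: adj_def poly_adj_def sum_distrib_left sum.swap[of _ "nbrs x"])
  finally show "poly_adj (pCons a p) f x = a * f x + adj (poly_adj p f) x" .
qed

lemma poly_adj_const: "poly_adj [:c:] f = (\<lambda>x. c * f x)"
  by (simp add: poly_adj_pCons)

lemma poly_adj_1 [simp]: "poly_adj 1 f = f"
  by (simp add: one_pCons poly_adj_const)

lemma poly_adj_X: "poly_adj [:0, 1:] f = adj f"
  by (simp add: poly_adj_pCons poly_adj_const)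

lemma poly_adj_linear_root: "poly_adj [:-t, 1:] f = (\<lambda>x. adj f x - t * f x)"
  by (simp add: poly_adj_pCons poly_adj_const)

lemma poly_adj_zero_fun [simp]: "poly_adj p (\<lambda>x. 0) = (\<lambda>x. 0)"
  by (induction p) (simp_all add: poly_adj_pCons)

lemma poly_adj_add: "poly_adj (p + q) f = (\<lambda>x. poly_adj p f x + poly_adj q f x)"
proof (induction p arbitrary: q)
  case (pCons a p)
  then show ?case
    by (cases q rule: pCons_cases) (simp add: poly_adj_pCons algebra_simps)
qed simp

lemma poly_adj_smult: "poly_adj (smult c p) f = (\<lambda>x. c * poly_adj p f x)"
  by (induction p) (simp_all add: poly_adj_pCons algebra_simps)

lemma poly_adj_diff: "poly_adj (p - q) f = (\<lambda>x. poly_adj p f x - poly_adj q f x)"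
  using poly_adj_add[of p "-q" f] poly_adj_smult[of "-1" q f] by simp

lemma poly_adj_sum: "poly_adj (\<Sum>k\<in>K. p k) f = (\<lambda>x. \<Sum>k\<in>K. poly_adj (p k) f x)"
  by (induction K rule: infinite_finite_induct) (simp_all add: poly_adj_add)

lemma poly_adj_mult: "poly_adj (p * q) f = poly_adj p (poly_adj q f)"
proof (induction p)
  case (pCons a p)
  have "pCons a p * q = smult a q + pCons 0 (p * q)" by simp
  with pCons.IH show ?case
    by (simp add: poly_adj_add poly_adj_smult poly_adj_pCons)
qed simp

lemma poly_adj_commute: "poly_adj p (poly_adj q f) = poly_adj q (poly_adj p f)"
  by (metis poly_adj_mult mult.commute)

lemma poly_adj_adj: "poly_adj p (adj f) = adj (poly_adj p f)"
  using poly_adj_commute[of p "[:0, 1:]" f] by (simp add: poly_adj_X)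

lemma poly_adj_monom: "poly_adj (monom c k) f = (\<lambda>x. c * (adj ^^ k) f x)"
proof
  fix x
  have "poly_adj (monom c k) f x = (\<Sum>j\<le>k. coeff (monom c k) j * (adj ^^ j) f x)"
    by (rule poly_adj_upto) (simp add: degree_monom_le)
  also have "\<dots> = (\<Sum>j\<le>k. if j = k then c * (adj ^^ j) f x else 0)"
    by (intro sum.cong) (auto simp: coeff_monom)
  finally show "poly_adj (monom c k) f x = c * (adj ^^ k) f x" by simp
qed

lemma poly_adj_eigenvector:
  assumes "\<forall>x\<in>V. adj f x = t * f x" and "x \<in> V"
  shows "poly_adj p f x = poly p t * f x"
  using assms(2)
proof (induction p arbitrary: x)
  case (pCons a p)
  have "adj (poly_adj p f) x = (\<Sum>y\<in>nbrs x. poly p t * f y)"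
    unfolding adj_def using pCons.IH nbrs_subset_V by (intro sum.cong) auto
  also have "\<dots> = poly p t * t * f x"
    using assms(1) pCons.prems by (simp add: sum_distrib_left flip: adj_def)
  finally show ?case by (simp add: poly_adj_pCons algebra_simps)
qed simp

lemma poly_adj_outside: "x \<notin> V \<Longrightarrow> f x = 0 \<Longrightarrow> poly_adj p f x = 0"
  by (induction p) (simp_all add: poly_adj_pCons adj_outside)

definition inner_V :: "('a \<Rightarrow> real) \<Rightarrow> ('a \<Rightarrow> real) \<Rightarrow> real" where
  "inner_V f g = (\<Sum>x\<in>V. f x * g x)"

lemma inner_V_commute: "inner_V f g = inner_V g f"
  by (simp add: inner_V_def mult.commute)

lemma inner_V_self_nonneg: "inner_V f f \<ge> 0"
  by (simp add: inner_V_def sum_nonneg)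

lemma inner_V_self_eq_0: "inner_V f f = 0 \<Longrightarrow> x \<in> V \<Longrightarrow> f x = 0"
  using sum_nonneg_eq_0_iff[OF finite_V, of "\<lambda>x. f x * f x"] by (simp add: inner_V_def)

lemma inner_V_adj: "inner_V (adj f) g = inner_V f (adj g)"
proof -
  have nbrs_sum: "(\<Sum>y\<in>nbrs x. h y) = (\<Sum>y\<in>V. if E x y then h y else 0)" for x h
    using finite_V by (simp add: nbrs_def sum.inter_filter)
  have "inner_V (adj f) g = (\<Sum>x\<in>V. \<Sum>y\<in>V. if E x y then f y * g x else 0)"
    unfolding inner_V_def adj_def nbrs_sum sum_distrib_right by (intro sum.cong) auto
  also have "\<dots> = (\<Sum>y\<in>V. \<Sum>x\<in>V. if E x y then f y * g x else 0)"
    by (rule sum.swap)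
  also have "\<dots> = (\<Sum>y\<in>V. \<Sum>x\<in>V. if E y x then f y * g x else 0)"
    using edge_sym by (intro sum.cong refl) (metis (full_types))
  also have "\<dots> = inner_V f (adj g)"
    unfolding inner_V_def adj_def nbrs_sum sum_distrib_left by (intro sum.cong) auto
  finally show ?thesis .
qed

lemma inner_V_linear_left: "inner_V (\<lambda>x. a * f x + h x) g = a * inner_V f g + inner_V h g"
  and inner_V_linear_right: "inner_V g (\<lambda>x. a * f x + h x) = a * inner_V g f + inner_V g h"
  by (simp_all add: inner_V_def algebra_simps sum.distrib sum_distrib_left)

lemma inner_V_poly_adj: "inner_V (poly_adj p f) g = inner_V f (poly_adj p g)"
  by (induction p arbitrary: g)
    (simp_all add: inner_V_def[of "\<lambda>x. 0"] inner_V_def[of _ "\<lambda>x. 0"] poly_adj_pCons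
      inner_V_linear_left inner_V_linear_right inner_V_adj poly_adj_adj)

definition delta :: "'a \<Rightarrow> 'a \<Rightarrow> real" where
  "delta y x = (if x = y then 1 else 0)"

lemma inner_V_delta: "y \<in> V \<Longrightarrow> inner_V f (delta y) = f y"
  using finite_V by (simp add: inner_V_def delta_def if_distrib cong: if_cong)

text \<open>\<open>entry p x y\<close> is the \<open>(x, y)\<close>-entry of the matrix \<open>p(A)\<close>.\<close>

abbreviation entry :: "real poly \<Rightarrow> 'a \<Rightarrow> 'a \<Rightarrow> real" where
  "entry p x y \<equiv> poly_adj p (delta y) x"

lemma entry_sym: "x \<in> V \<Longrightarrow> y \<in> V \<Longrightarrow> entry p x y = entry p y x"
  using inner_V_poly_adj[of p "delta y" "delta x"] inner_V_commute[of "delta y"]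
  by (simp add: inner_V_delta)

lemma poly_adj_as_sum_entries: "x \<in> V \<Longrightarrow> poly_adj p f x = (\<Sum>y\<in>V. entry p x y * f y)"
proof (induction p arbitrary: x)
  case (pCons a p)
  have "adj (poly_adj p f) x = (\<Sum>z\<in>nbrs x. \<Sum>y\<in>V. entry p z y * f y)"
    unfolding adj_def using pCons.IH nbrs_subset_V by (intro sum.cong refl) blast
  also have "\<dots> = (\<Sum>y\<in>V. adj (poly_adj p (delta y)) x * f y)"
    by (simp add: adj_def sum.swap[of _ "nbrs x"] sum_distrib_right)
  moreover have "a * f x = (\<Sum>y\<in>V. a * delta y x * f y)"
  proof -
    have "(\<Sum>y\<in>V. a * delta y x * f y) = (\<Sum>y\<in>V. if y = x then a * f y else 0)"
      by (intro sum.cong) (auto simp: delta_def)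
    then show ?thesis using finite_V pCons.prems by simp
  qed
  ultimately show ?case
    by (simp add: poly_adj_pCons sum.distrib[symmetric] distrib_right)
qed simp

abbreviation walks :: "nat \<Rightarrow> 'a \<Rightarrow> 'a \<Rightarrow> real" where
  "walks k x y \<equiv> (adj ^^ k) (delta y) x"

lemma walks_nonneg: "walks k x y \<ge> 0"
  by (induction k arbitrary: x) (auto simp: delta_def adj_def intro!: sum_nonneg)

lemma walks_pos_iff: "walks k x y > 0 \<longleftrightarrow> (x, y) \<in> edge_rel V E ^^ k"
proof (induction k arbitrary: x)
  case (Suc k)
  have "(\<Sum>z\<in>nbrs x. walks k z y) = 0 \<longleftrightarrow> (\<forall>z\<in>nbrs x. walks k z y = 0)"
    by (rule sum_nonneg_eq_0_iff) (simp_all add: walks_nonneg)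
  moreover have "(\<Sum>z\<in>nbrs x. walks k z y) \<ge> 0"
    by (simp add: sum_nonneg walks_nonneg)
  ultimately have "walks (Suc k) x y > 0 \<longleftrightarrow> (\<exists>z\<in>nbrs x. walks k z y > 0)"
    by (auto simp: adj_def less_le walks_nonneg)
  also have "\<dots> \<longleftrightarrow> (\<exists>z. E x z \<and> (z, y) \<in> edge_rel V E ^^ k)"
    using Suc.IH edge_in_V by (auto simp: nbrs_def)
  also have "\<dots> \<longleftrightarrow> (x, y) \<in> edge_rel V E ^^ Suc k"
    by (metis edge_rel_iff relpow_Suc_E2 relpow_Suc_I2)
  finally show ?case .
qed (simp add: delta_def)

lemma entry_monom: "entry (monom 1 k) x y = walks k x y"
  by (simp add: poly_adj_monom)

lemma walks_sym: "x \<in> V \<Longrightarrow> y \<in> V \<Longrightarrow> walks k x y = walks k y x"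
  using entry_sym[of x y "monom 1 k"] by (simp add: entry_monom)

lemma relpow_edge_rel_in_V: "(x, y) \<in> edge_rel V E ^^ k \<Longrightarrow> x \<in> V \<Longrightarrow> y \<in> V"
  by (cases k) (auto simp: edge_rel_def elim: relpow_Suc_E)

lemma relpow_edge_rel_sym: "(x, y) \<in> edge_rel V E ^^ k \<Longrightarrow> x \<in> V \<Longrightarrow> (y, x) \<in> edge_rel V E ^^ k"
  using relpow_edge_rel_in_V walks_sym[of x y k] by (simp flip: walks_pos_iff)

definition on_V :: "('a \<Rightarrow> real) \<Rightarrow> bool" where
  "on_V f \<longleftrightarrow> (\<forall>x. x \<notin> V \<longrightarrow> f x = 0)"

lemma on_V_poly_adj: "on_V f \<Longrightarrow> on_V (poly_adj p f)"
  by (simp add: on_V_def poly_adj_outside)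

lemma on_V_delta: "y \<in> V \<Longrightarrow> on_V (delta y)"
  by (auto simp: on_V_def delta_def)

lemma on_V_eq_0: "on_V f \<Longrightarrow> (\<And>x. x \<in> V \<Longrightarrow> f x = 0) \<Longrightarrow> f = (\<lambda>x. 0)"
  by (auto simp: on_V_def)

lemma on_V_inner_self_eq_0: "on_V f \<Longrightarrow> inner_V f f = 0 \<Longrightarrow> f = (\<lambda>x. 0)"
  by (blast intro: on_V_eq_0 inner_V_self_eq_0)

lemma on_V_in_span_delta: "on_V g \<Longrightarrow> g \<in> fun_vs.span (delta ` V)"
proof -
  assume "on_V g"
  have "g = (\<Sum>y\<in>V. (\<lambda>x. g y * delta y x))"
  proof
    fix x
    have "(\<Sum>y\<in>V. g y * delta y x) = (\<Sum>y\<in>V. if x = y then g y else 0)"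
      by (intro sum.cong) (auto simp: delta_def)
    then show "g x = (\<Sum>y\<in>V. (\<lambda>x. g y * delta y x)) x"
      using \<open>on_V g\<close> finite_V by (simp add: sum_fun_apply on_V_def)
  qed
  also have "\<dots> \<in> fun_vs.span (delta ` V)"
    by (intro fun_vs.span_sum fun_vs.span_scale fun_vs.span_base) auto
  finally show ?thesis .
qed

lemma annihilating_poly_if_dependent:
  assumes "fun_vs.dependent ((\<lambda>k. (adj ^^ k) f) ` K)" and "inj_on (\<lambda>k. (adj ^^ k) f) K"
    and "finite K"
  obtains p where "p \<noteq> 0" "poly_adj p f = (\<lambda>x. 0)"
proof -
  define vec where "vec = (\<lambda>k. (adj ^^ k) f)"
  obtain U u where U: "U \<subseteq> vec ` K" "(\<Sum>v\<in>U. (\<lambda>x. u v * v x)) = 0" "\<exists>v\<in>U. u v \<noteq> 0"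
    using assms(1) unfolding fun_vs.dependent_explicit vec_def by blast
  define L where "L = {k\<in>K. vec k \<in> U}"
  have UL: "U = vec ` L" and inj_L: "inj_on vec L"
    using U(1) inj_on_subset[OF assms(2)] by (auto simp: L_def vec_def)
  define p where "p = (\<Sum>k\<in>L. monom (u (vec k)) k)"
  obtain k0 where k0: "k0 \<in> L" "u (vec k0) \<noteq> 0"
    using U(3) UL by blast
  have "coeff p k0 = u (vec k0)"
    using k0(1) assms(3) by (simp add: p_def coeff_sum coeff_monom L_def if_distrib cong: if_cong)
  then have "p \<noteq> 0" using k0 by auto
  moreover have "poly_adj p f = (\<lambda>x. \<Sum>k\<in>L. u (vec k) * vec k x)"
    by (simp add: p_def poly_adj_sum poly_adj_monom vec_def)
  moreover have "\<dots> = (\<lambda>x. \<Sum>v\<in>U. u v * v x)"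
    unfolding UL sum.reindex[OF inj_L] by simp
  moreover have "\<dots> = (\<lambda>x. 0)"
    using fun_cong[OF U(2)] by (simp add: sum_fun_apply fun_eq_iff)
  ultimately show thesis
    using that by simp
qed

text \<open>The functions \<open>A\<^sup>k f\<close>, \<open>k \<le> |V|\<close>, live in a space of dimension \<open>|V|\<close>, so they are
  linearly dependent.\<close>

lemma exists_annihilating_poly:
  assumes "on_V f"
  obtains p where "p \<noteq> 0" "poly_adj p f = (\<lambda>x. 0)"
proof (cases "inj_on (\<lambda>k. (adj ^^ k) f) {0..card V}")
  case False
  then obtain i j where "i \<noteq> j" "(adj ^^ i) f = (adj ^^ j) f"
    unfolding inj_on_def by blast
  moreover have "coeff (monom 1 i - monom (1::real) j) i = 1"
    using \<open>i \<noteq> j\<close> by (simp add: coeff_monom)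
  then have "monom 1 i - monom (1::real) j \<noteq> 0"
    by (metis coeff_0 zero_neq_one)
  ultimately show thesis
    using that[of "monom 1 i - monom 1 j"] by (simp add: poly_adj_diff poly_adj_monom)
next
  case True
  have span: "(\<lambda>k. (adj ^^ k) f) ` {0..card V} \<subseteq> fun_vs.span (delta ` V)"
    using assms on_V_poly_adj[of f "monom 1 _"] on_V_in_span_delta by (auto simp: poly_adj_monom)
  have "fun_vs.dependent ((\<lambda>k. (adj ^^ k) f) ` {0..card V})"
  proof (rule ccontr)
    assume "fun_vs.independent ((\<lambda>k. (adj ^^ k) f) ` {0..card V})"
    then have "card ((\<lambda>k. (adj ^^ k) f) ` {0..card V}) \<le> card (delta ` V)"
      using fun_vs.independent_span_bound[OF _ _ span] finite_V by blast
    then show False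
      using card_image[OF True] card_image_le[OF finite_V, of delta] by simp
  qed
  then show thesis
    using annihilating_poly_if_dependent True that by blast
qed

lemma eigenvector_in_range_eq_0:
  assumes "on_V h" and "\<forall>x\<in>V. adj g x = t * g x" and "g = poly_adj [:-t, 1:] h"
  shows "g = (\<lambda>x. 0)"
proof -
  have "inner_V g g = inner_V h (poly_adj [:-t, 1:] g)"
    using assms(3) inner_V_poly_adj by simp
  also have "\<dots> = 0"
    using assms(2) by (simp add: inner_V_def poly_adj_linear_root)
  finally show ?thesis
    using assms(1,3) on_V_poly_adj on_V_inner_self_eq_0 by blast
qed

text \<open>The quadratic factor is \<open>(X - a)\<^sup>2 + b\<^sup>2\<close>, so \<open>\<langle>Q(A) g, g\<rangle> = |(A - a) g|\<^sup>2 + b\<^sup>2 |g|\<^sup>2\<close>.\<close>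

lemma irreducible_quadratic_kernel_eq_0:
  assumes "on_V g" and "b \<noteq> 0" and "\<forall>x\<in>V. poly_adj [:a\<^sup>2 + b\<^sup>2, -2*a, 1:] g x = 0"
  shows "g = (\<lambda>x. 0)"
proof -
  define h where "h = poly_adj [:-a, 1:] g"
  have Q_split: "[:-a, 1:] * [:-a, 1:] + [:b\<^sup>2:] = [:a\<^sup>2 + b\<^sup>2, -2*a, 1:]"
    by (simp add: power2_eq_square)
  have Q_g: "poly_adj [:a\<^sup>2 + b\<^sup>2, -2*a, 1:] g = (\<lambda>x. poly_adj [:-a, 1:] h x + b\<^sup>2 * g x)"
    using poly_adj_add[of "[:-a, 1:] * [:-a, 1:]" "[:b\<^sup>2:]" g]
    by (simp only: Q_split poly_adj_mult poly_adj_const h_def)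
  have "0 = inner_V (poly_adj [:a\<^sup>2 + b\<^sup>2, -2*a, 1:] g) g"
    using assms(3) by (simp add: inner_V_def)
  also have "\<dots> = inner_V (poly_adj [:-a, 1:] h) g + b\<^sup>2 * inner_V g g"
    unfolding Q_g by (simp add: inner_V_def sum.distrib sum_distrib_left algebra_simps)
  also have "inner_V (poly_adj [:-a, 1:] h) g = inner_V h h"
    by (simp add: inner_V_poly_adj h_def)
  finally have "b\<^sup>2 * inner_V g g \<le> 0"
    using inner_V_self_nonneg[of h] by linarith
  then have "inner_V g g = 0"
    using assms(2) inner_V_self_nonneg[of g] by (simp add: mult_le_0_iff)
  then show ?thesis
    using assms(1) on_V_inner_self_eq_0 by blast
qed

lemma eigenvalue_product_linear_factor:
  assumes "finite S" and "adj_eigenvalues V E \<subseteq> S" and "on_V f"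
    and "poly_adj [:-a, 1:] (poly_adj (\<Prod>s\<in>S. [:-s, 1:]) f) = (\<lambda>x. 0)"
  shows "poly_adj (\<Prod>s\<in>S. [:-s, 1:]) f = (\<lambda>x. 0)"
proof -
  define g where "g = poly_adj (\<Prod>s\<in>S. [:-s, 1:]) f"
  have g_on_V: "on_V g"
    using assms(3) by (simp add: g_def on_V_poly_adj)
  have g_eigen: "\<forall>x\<in>V. adj g x = a * g x"
    using assms(4) by (simp add: g_def poly_adj_linear_root fun_eq_iff)
  show ?thesis
  proof (cases "\<exists>x\<in>V. g x \<noteq> 0")
    case True
    then have "a \<in> S"
      using g_eigen assms(2) eigenvalue_iff_adj by blast
    then have "(\<Prod>s\<in>S. [:-s, 1:]) = [:-a, 1:] * (\<Prod>s\<in>S - {a}. [:-s, 1:])"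
      using assms(1) by (simp add: prod.remove)
    then have "g = poly_adj [:-a, 1:] (poly_adj (\<Prod>s\<in>S - {a}. [:-s, 1:]) f)"
      unfolding g_def by (simp only: poly_adj_mult)
    then show ?thesis
      using eigenvector_in_range_eq_0 g_eigen on_V_poly_adj[OF assms(3)] by (simp add: g_def)
  qed (use g_on_V on_V_eq_0 g_def in blast)
qed

lemma eigenvalue_product_annihilates_annihilated:
  assumes "finite S" and "adj_eigenvalues V E \<subseteq> S"
    and "on_V f" and "p \<noteq> 0" and "poly_adj p f = (\<lambda>x. 0)"
  shows "poly_adj (\<Prod>s\<in>S. [:-s, 1:]) f = (\<lambda>x. 0)"
  using assms(3-5)
proof (induction "degree p" arbitrary: p f rule: less_induct)
  case less
  define M where "M = (\<Prod>s\<in>S. [:-s, 1:])"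
  have factor: "poly_adj r (poly_adj M f) = (\<lambda>x. 0)"
    if "p = r * q" and "q \<noteq> 0" and "degree r > 0" for r q
  proof -
    have "degree q < degree p"
      using that less.prems(2) by (simp add: degree_mult_eq)
    moreover have "on_V (poly_adj r f)" "poly_adj q (poly_adj r f) = (\<lambda>x. 0)"
      using less.prems(1,3) that(1) poly_adj_commute[of r q f] by (simp_all add: on_V_poly_adj poly_adj_mult)
    ultimately have "poly_adj M (poly_adj r f) = (\<lambda>x. 0)"
      unfolding M_def using less.hyps \<open>q \<noteq> 0\<close> by blast
    then show ?thesis
      by (simp add: poly_adj_commute)
  qed
  show ?case
  proof (cases "degree p = 0")
    case True
    then obtain c where "p = [:c:]" "c \<noteq> 0"
      using less.prems(2) by (metis degree_eq_zeroE pCons_0_0)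
    then have "f = (\<lambda>x. 0)"
      using less.prems(3) by (simp add: poly_adj_const fun_eq_iff)
    then show ?thesis by simp
  next
    case False
    then have "degree p > 0" by simp
    then show ?thesis
    proof (cases rule: real_poly_linear_or_quadratic_factor)
      case (1 a q)
      then have "q \<noteq> 0"
        using less.prems(2) by auto
      then have "poly_adj [:-a, 1:] (poly_adj M f) = (\<lambda>x. 0)"
        by (rule factor[OF 1]) simp
      then show ?thesis
        unfolding M_def using eigenvalue_product_linear_factor assms(1,2) less.prems(1) by blast
    next
      case (2 a b q)
      then have "q \<noteq> 0"
        using less.prems(2) by auto
      then have "poly_adj [:a\<^sup>2 + b\<^sup>2, -2*a, 1:] (poly_adj M f) = (\<lambda>x. 0)"
        by (rule factor[OF 2(2)]) simp
      then have "\<forall>x\<in>V. poly_adj [:a\<^sup>2 + b\<^sup>2, -2*a, 1:] (poly_adj M f) x = 0"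
        by simp
      then show ?thesis
        unfolding M_def
        using irreducible_quadratic_kernel_eq_0 on_V_poly_adj[OF less.prems(1)] 2(1) by blast
    qed
  qed
qed

lemma eigenvalue_product_annihilates:
  assumes "finite S" and "adj_eigenvalues V E \<subseteq> S" and "x \<in> V"
  shows "poly_adj (\<Prod>s\<in>S. [:-s, 1:]) f x = 0"
proof -
  have "poly_adj (\<Prod>s\<in>S. [:-s, 1:]) (delta y) = (\<lambda>x. 0)" if "y \<in> V" for y
    using exists_annihilating_poly[OF on_V_delta[OF that]]
      eigenvalue_product_annihilates_annihilated[OF assms(1,2) on_V_delta[OF that]] by metis
  then show ?thesis
    using poly_adj_as_sum_entries[OF assms(3)] by simp
qed

lemma poly_adj_eq_0_if_vanishes_on_eigenvalues:
  assumes "finite S" and "adj_eigenvalues V E \<subseteq> S" and "\<forall>s\<in>S. poly p s = 0" and "x \<in> V"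
  shows "poly_adj p f x = 0"
proof -
  obtain q where "p = (\<Prod>s\<in>S. [:-s, 1:]) * q"
    using prod_linear_factors_dvd[OF assms(1,3)] by (elim dvdE)
  then show ?thesis
    using eigenvalue_product_annihilates[OF assms(1,2,4)] by (simp add: poly_adj_mult)
qed

end

section \<open>Distances in a connected graph\<close>

locale conn_sgraph = sgraph +
  assumes connected: "connected_graph V E"
begin

abbreviation gd :: "'a \<Rightarrow> 'a \<Rightarrow> nat" where
  "gd \<equiv> gdist V E"

lemma relpow_gdist: "x \<in> V \<Longrightarrow> y \<in> V \<Longrightarrow> (x, y) \<in> edge_rel V E ^^ gd x y"
  using connected unfolding connected_graph_def gdist_def
  by (meson LeastI rtrancl_power)

lemma gdist_le: "(x, y) \<in> edge_rel V E ^^ k \<Longrightarrow> gd x y \<le> k"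
  unfolding gdist_def by (rule Least_le)

lemma walks_below_gdist: "k < gd x y \<Longrightarrow> walks k x y = 0"
  using walks_pos_iff[where k = k and x = x and y = y] walks_nonneg[where k = k and x = x and y = y]
    gdist_le[of x y k] by linarith

lemma walks_gdist_pos: "x \<in> V \<Longrightarrow> y \<in> V \<Longrightarrow> walks (gd x y) x y > 0"
  using walks_pos_iff relpow_gdist by blast

lemma gdist_sym: "x \<in> V \<Longrightarrow> y \<in> V \<Longrightarrow> gd x y = gd y x"
  using relpow_gdist gdist_le relpow_edge_rel_sym by (meson antisym)

lemma gdist_self [simp]: "gd x x = 0"
  using gdist_le[of x x 0] by simp

lemma gdist_eq_0_iff: "x \<in> V \<Longrightarrow> y \<in> V \<Longrightarrow> gd x y = 0 \<longleftrightarrow> x = y"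
  using relpow_gdist[of x y] by auto

lemma gdist_triangle: "x \<in> V \<Longrightarrow> y \<in> V \<Longrightarrow> z \<in> V \<Longrightarrow> gd x z \<le> gd x y + gd y z"
  using relpow_gdist[of x y] relpow_gdist[of y z] gdist_le
  by (metis relcomp.relcompI relpow_add)

lemma gdist_edge: "E x y \<Longrightarrow> gd x y \<le> 1"
  using gdist_le[of x y 1] edge_rel_iff by simp

lemma diameter_eq_Max: "diameter V E = Max ((\<lambda>(u, w). gd u w) ` (V \<times> V))"
  unfolding diameter_def by (rule arg_cong[where f = Max]) auto

lemma gdist_le_diameter: "x \<in> V \<Longrightarrow> y \<in> V \<Longrightarrow> gd x y \<le> diameter V E"
  unfolding diameter_eq_Max using finite_V by (intro Max_ge) auto

lemma exists_gdist_eq_diameter: "\<exists>u\<in>V. \<exists>v\<in>V. gd u v = diameter V E"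
proof -
  have "diameter V E \<in> (\<lambda>(u, w). gd u w) ` (V \<times> V)"
    unfolding diameter_eq_Max using finite_V V_nonempty by (intro Max_in) auto
  then show ?thesis by force
qed

lemma exists_edge_leaving_sphere:
  assumes "1 \<le> i" and "i \<le> diameter V E"
  shows "\<exists>u\<in>V. \<exists>x\<in>V. \<exists>z\<in>V. gd x u = i - 1 \<and> E x z \<and> gd z u = i"
proof -
  obtain u v where uv: "u \<in> V" "v \<in> V" "gd u v = diameter V E"
    using exists_gdist_eq_diameter by blast
  then have "(u, v) \<in> edge_rel V E ^^ ((i - 1) + Suc (diameter V E - i))"
    using relpow_gdist[of u v] assms by simp
  then obtain x z where x: "(u, x) \<in> edge_rel V E ^^ (i - 1)" and "(x, z) \<in> edge_rel V E"
      and z: "(z, v) \<in> edge_rel V E ^^ (diameter V E - i)"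
    by (metis relpow_Suc_E2 relpow_add relcompE prod.inject)
  then have V: "x \<in> V" "z \<in> V" and "E x z"
    using uv relpow_edge_rel_in_V edge_rel_iff edge_in_V by blast+
  have "gd u x \<le> i - 1" "gd z v \<le> diameter V E - i"
    using gdist_le x z by blast+
  moreover have "gd u v \<le> gd u z + gd z v" "gd u z \<le> gd u x + gd x z" "gd u x \<le> gd u z + gd z x"
    using gdist_triangle uv V by blast+
  moreover have "gd x z \<le> 1" "gd z x \<le> 1"
    using gdist_edge edge_sym \<open>E x z\<close> by blast+
  ultimately have "gd u z = i" "gd u x = i - 1"
    using uv(3) assms by linarith+
  then show ?thesis
    using gdist_sym uv V \<open>E x z\<close> by metis
qed

lemma exists_gdist_eq:
  assumes "j \<le> diameter V E"
  shows "\<exists>x\<in>V. \<exists>y\<in>V. gd x y = j"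
proof (cases j)
  case 0
  then show ?thesis using V_nonempty by fastforce
next
  case (Suc i)
  then show ?thesis
    using exists_edge_leaving_sphere[of j] assms by auto
qed

text \<open>Walks of length \<open>k\<close> cannot reach beyond distance \<open>k\<close>, so in \<open>p(A)\<close> only the coefficient of
  \<open>A\<^bsup>gd x y\<^esup>\<close> can contribute to the entry at \<open>(x, y)\<close> once the higher ones vanish.\<close>

lemma entry_eq_coeff_walks:
  assumes "\<forall>j > gd x y. coeff p j = 0"
  shows "entry p x y = coeff p (gd x y) * walks (gd x y) x y"
proof -
  have "entry p x y = (\<Sum>j\<le>degree p + gd x y. coeff p j * walks j x y)"
    by (rule poly_adj_upto) simp
  also have "\<dots> = (\<Sum>j\<le>degree p + gd x y. if j = gd x y then coeff p j * walks j x y else 0)"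
    using assms walks_below_gdist[of _ x y] by (intro sum.cong) (auto simp: linorder_neq_iff)
  finally show ?thesis by simp
qed

lemma entry_eq_0_if_degree_less: "degree p < gd x y \<Longrightarrow> entry p x y = 0"
  using entry_eq_coeff_walks[of x y p] by (simp add: coeff_eq_0)

lemma entry_eq_0_iff_coeff_eq_0:
  assumes "degree p \<le> gd x y" and "x \<in> V" and "y \<in> V"
  shows "entry p x y = 0 \<longleftrightarrow> coeff p (gd x y) = 0"
  using entry_eq_coeff_walks[of x y p] walks_gdist_pos[OF assms(2,3)] assms(1)
  by (simp add: coeff_eq_0)

lemma entry_pCons_0: "entry (pCons 0 a) x y = (\<Sum>z\<in>nbrs x. entry a z y)"
  by (simp add: poly_adj_pCons adj_def)

text \<open>\<open>dist_poly i p\<close>: \<open>p(A)\<close> is the distance-\<open>i\<close> matrix \<open>A\<^sub>i\<close> and \<open>deg p \<le> i\<close>;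
  \<open>ball_poly i p\<close>: \<open>p(A) = A\<^sub>0 + \<dots> + A\<^sub>i\<close> and \<open>deg p \<le> i\<close>.\<close>

definition dist_poly :: "nat \<Rightarrow> real poly \<Rightarrow> bool" where
  "dist_poly i p \<longleftrightarrow> degree p \<le> i \<and> (\<forall>x\<in>V. \<forall>y\<in>V. entry p x y = of_bool (gd x y = i))"

definition ball_poly :: "nat \<Rightarrow> real poly \<Rightarrow> bool" where
  "ball_poly i p \<longleftrightarrow> degree p \<le> i \<and> (\<forall>x\<in>V. \<forall>y\<in>V. entry p x y = of_bool (gd x y \<le> i))"

lemma entry_pCons_0_dist_poly:
  assumes "dist_poly j a" and "y \<in> V"
  shows "entry (pCons 0 a) x y = card (nbrs x \<inter> {z. gd z y = j})"
proof -
  have "(\<Sum>z\<in>nbrs x. entry a z y) = (\<Sum>z\<in>nbrs x. of_bool (gd z y = j))"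
    using assms nbrs_subset_V unfolding dist_poly_def by (intro sum.cong refl) blast
  then show ?thesis by (simp add: entry_pCons_0)
qed

lemma dist_poly_coeff_neq_0:
  assumes "dist_poly i p" and "i \<le> diameter V E"
  shows "coeff p i \<noteq> 0"
proof -
  obtain x y where "x \<in> V" "y \<in> V" "gd x y = i"
    using exists_gdist_eq[OF assms(2)] by blast
  then show ?thesis
    using assms(1) entry_eq_0_iff_coeff_eq_0[of p x y] by (simp add: dist_poly_def)
qed

lemma ball_poly_diff_dist_poly:
  assumes "ball_poly (Suc i) s" and "dist_poly (Suc i) a" and "Suc i \<le> diameter V E"
  shows "ball_poly i (s - a)"
proof -
  have entries: "entry (s - a) x y = of_bool (gd x y \<le> i)" if "x \<in> V" "y \<in> V" for x y
    using assms(1,2) that by (auto simp: ball_poly_def dist_poly_def poly_adj_diff)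
  obtain x y where xy: "x \<in> V" "y \<in> V" "gd x y = Suc i"
    using exists_gdist_eq[OF assms(3)] by blast
  have "degree (s - a) \<le> Suc i"
    using assms(1,2) by (auto simp: ball_poly_def dist_poly_def intro: degree_diff_le)
  moreover from this have "coeff (s - a) (Suc i) = 0"
    using entry_eq_0_iff_coeff_eq_0[of "s - a" x y] entries xy by simp
  ultimately show ?thesis
    using entries by (simp add: ball_poly_def degree_le_if_coeff_Suc_eq_0)
qed

text \<open>The three-term recurrence: subtracting suitable multiples of \<open>A\<^sub>i\<^sub>+\<^sub>2\<close> and \<open>A\<^sub>i\<^sub>+\<^sub>1\<close> from
  \<open>A A\<^sub>i\<^sub>+\<^sub>1\<close> cancels the two top coefficients.\<close>

lemma three_term_poly:
  assumes a: "dist_poly (Suc i) a" and b: "dist_poly (Suc (Suc i)) b" "coeff b (Suc (Suc i)) \<noteq> 0"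
    and i: "Suc i \<le> diameter V E"
  obtains w c0 c1 where "degree w \<le> i"
    and "\<And>x y. x \<in> V \<Longrightarrow> y \<in> V \<Longrightarrow> entry w x y = real (card (nbrs x \<inter> {z. gd z y = Suc i}))
      - c1 * of_bool (gd x y = Suc (Suc i)) - c0 * of_bool (gd x y = Suc i)"
proof -
  define c1 where "c1 = coeff a (Suc i) / coeff b (Suc (Suc i))"
  define w0 where "w0 = pCons 0 a - smult c1 b"
  define c0 where "c0 = coeff w0 (Suc i) / coeff a (Suc i)"
  define w where "w = w0 - smult c0 a"
  have "degree w0 \<le> Suc (Suc i)"
    using a b by (auto simp: w0_def dist_poly_def degree_pCons_le intro!: degree_diff_le
        intro: order.trans[OF degree_smult_le])
  moreover have "coeff w0 (Suc (Suc i)) = 0"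
    using b(2) by (simp add: w0_def c1_def)
  ultimately have "degree w0 \<le> Suc i"
    by (rule degree_le_if_coeff_Suc_eq_0)
  then have "degree w \<le> Suc i"
    using a by (auto simp: w_def dist_poly_def intro!: degree_diff_le intro: order.trans[OF degree_smult_le])
  moreover have "coeff w (Suc i) = 0"
    using dist_poly_coeff_neq_0[OF a i] by (simp add: w_def c0_def)
  ultimately have "degree w \<le> i"
    by (rule degree_le_if_coeff_Suc_eq_0)
  moreover have "entry w x y = real (card (nbrs x \<inter> {z. gd z y = Suc i}))
      - c1 * of_bool (gd x y = Suc (Suc i)) - c0 * of_bool (gd x y = Suc i)"
    if "x \<in> V" "y \<in> V" for x y
    using a b that entry_pCons_0_dist_poly[OF a \<open>y \<in> V\<close>]
    by (simp add: w_def w0_def dist_poly_def poly_adj_diff poly_adj_smult)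
  ultimately show thesis
    by (rule that)
qed

text \<open>The polynomial from the recurrence is supported on the pairs at distance \<open>i\<close>; comparing it with
  \<open>A\<^sub>0 + \<dots> + A\<^sub>i\<close> via the coefficient of \<open>A\<^sup>i\<close> shows that it is constant there.\<close>

lemma exists_dist_poly_below:
  assumes a: "dist_poly (Suc i) a" and b: "dist_poly (Suc (Suc i)) b" "coeff b (Suc (Suc i)) \<noteq> 0"
    and s: "ball_poly i s" and i: "Suc i \<le> diameter V E"
  shows "\<exists>w. dist_poly i w"
proof -
  obtain w c1 c0 where deg_w: "degree w \<le> i"
    and entry_w: "\<And>x y. x \<in> V \<Longrightarrow> y \<in> V \<Longrightarrow> entry w x y = real (card (nbrs x \<inter> {z. gd z y = Suc i}))
      - c1 * of_bool (gd x y = Suc (Suc i)) - c0 * of_bool (gd x y = Suc i)"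
    using three_term_poly[OF a b i] by metis
  define \<gamma> where "\<gamma> = coeff w i / coeff s i"
  have entry_w_sphere: "entry w x y = \<gamma> * of_bool (gd x y = i)" if "x \<in> V" "y \<in> V" for x y
  proof (cases "gd x y" i rule: linorder_cases)
    case less
    have "gd z y \<noteq> Suc i" if "z \<in> nbrs x" for z
    proof -
      have "z \<in> V" "E z x"
        using that edge_sym by (auto simp: nbrs_def)
      then show ?thesis
        using gdist_triangle[of z x y] gdist_edge[of z x] less \<open>x \<in> V\<close> \<open>y \<in> V\<close> by linarith
    qed
    then have "nbrs x \<inter> {z. gd z y = Suc i} = {}" by blast
    then show ?thesis
      using entry_w[OF that] less by simp
  next
    case equal
    have w_walks: "entry w x y = coeff w i * walks i x y"
      using entry_eq_coeff_walks[of x y w] deg_w equal by (auto simp: coeff_eq_0)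
    have "coeff s i * walks i x y = 1"
      using entry_eq_coeff_walks[of x y s] s that equal by (auto simp: ball_poly_def coeff_eq_0)
    then have "walks i x y = 1 / coeff s i"
      by (auto simp: eq_divide_eq mult.commute)
    then show ?thesis
      using w_walks equal by (simp add: \<gamma>_def)
  next
    case greater
    then show ?thesis
      using entry_eq_0_if_degree_less[of w x y] deg_w by simp
  qed
  obtain u x z where uxz: "u \<in> V" "x \<in> V" "z \<in> V" "gd x u = i" "E x z" "gd z u = Suc i"
    using exists_edge_leaving_sphere[of "Suc i"] i by auto
  then have "z \<in> nbrs x \<inter> {z. gd z u = Suc i}"
    by (simp add: nbrs_def)
  then have "card (nbrs x \<inter> {z. gd z u = Suc i}) \<noteq> 0"
    by auto
  then have "\<gamma> \<noteq> 0"
    using entry_w[OF uxz(2,1)] entry_w_sphere[OF uxz(2,1)] uxz(4) by simp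
  then have "dist_poly i (smult (1 / \<gamma>) w)"
    using deg_w entry_w_sphere by (simp add: dist_poly_def poly_adj_smult)
  then show ?thesis ..
qed

lemma exists_dist_poly_downward:
  assumes "dist_poly D a" and "dist_poly (Suc D) b" and "coeff b (Suc D) \<noteq> 0"
    and "ball_poly D s" and "D \<le> diameter V E" and "i \<le> D"
  shows "\<exists>a. dist_poly i a"
proof -
  have "\<exists>a b s. dist_poly i a \<and> dist_poly (Suc i) b \<and> coeff b (Suc i) \<noteq> 0 \<and> ball_poly i s"
    using \<open>i \<le> D\<close>
  proof (induction rule: inc_induct)
    case base
    then show ?case using assms by blast
  next
    case (step i)
    then obtain a b s where "dist_poly (Suc i) a" "dist_poly (Suc (Suc i)) b"
        "coeff b (Suc (Suc i)) \<noteq> 0" "ball_poly (Suc i) s"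
      by blast
    moreover have "Suc i \<le> diameter V E"
      using step.hyps assms(5) by simp
    ultimately show ?case
      using exists_dist_poly_below ball_poly_diff_dist_poly dist_poly_coeff_neq_0 by blast
  qed
  then show ?thesis by blast
qed

lemma entries_depend_on_gdist:
  assumes "\<forall>i\<le>diameter V E. \<exists>a. dist_poly i a" and "D \<le> diameter V E" and "degree r \<le> D"
  shows "\<exists>\<gamma>. \<forall>x\<in>V. \<forall>y\<in>V. entry r x y = \<gamma> (gd x y)"
  using assms(2,3)
proof (induction D arbitrary: r)
  case 0
  then have "degree r = 0" by simp
  then obtain c where "r = [:c:]"
    by (rule degree_eq_zeroE)
  then have "entry r x y = c * of_bool (gd x y = 0)" if "x \<in> V" "y \<in> V" for x y
    using gdist_eq_0_iff[OF that] by (cases "x = y") (simp_all add: poly_adj_const delta_def)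
  then show ?case
    by (intro exI[of _ "\<lambda>t. c * of_bool (t = 0)"]) simp
next
  case (Suc D)
  obtain a where a: "dist_poly (Suc D) a"
    using assms(1) Suc.prems by blast
  define c where "c = coeff r (Suc D) / coeff a (Suc D)"
  have "degree (r - smult c a) \<le> Suc D"
    using a Suc.prems by (auto simp: dist_poly_def intro!: degree_diff_le intro: order.trans[OF degree_smult_le])
  moreover have "coeff (r - smult c a) (Suc D) = 0"
    using dist_poly_coeff_neq_0[OF a] Suc.prems by (simp add: c_def)
  ultimately have "degree (r - smult c a) \<le> D"
    by (rule degree_le_if_coeff_Suc_eq_0)
  then obtain \<gamma> where \<gamma>: "\<forall>x\<in>V. \<forall>y\<in>V. entry (r - smult c a) x y = \<gamma> (gd x y)"
    using Suc.IH Suc.prems(1) by (meson Suc_leD)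
  have "entry r x y = \<gamma> (gd x y) + c * of_bool (gd x y = Suc D)" if "x \<in> V" "y \<in> V" for x y
  proof -
    have "entry (r - smult c a) x y = entry r x y - c * of_bool (gd x y = Suc D)"
      using a that by (simp add: dist_poly_def poly_adj_diff poly_adj_smult)
    then show ?thesis
      using \<gamma> that by simp
  qed
  then show ?case
    by (intro exI[of _ "\<lambda>t. \<gamma> t + c * of_bool (t = Suc D)"]) simp
qed

lemma distance_regular_if_dist_polys:
  assumes dist_polys: "\<forall>i\<le>diameter V E. \<exists>a. dist_poly i a"
    and closed: "\<forall>r. \<exists>\<gamma>. \<forall>x\<in>V. \<forall>y\<in>V. entry r x y = \<gamma> (gd x y)"
  shows "distance_regular V E"
proof -
  obtain A where A: "\<And>j. j \<le> diameter V E \<Longrightarrow> dist_poly j (A j)"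
    using dist_polys by metis
  have "\<forall>j. \<exists>\<gamma>. \<forall>x\<in>V. \<forall>y\<in>V. entry (pCons 0 (A j)) x y = \<gamma> (gd x y)"
    using closed by blast
  then obtain \<Gamma> where \<Gamma>: "\<forall>j. \<forall>x\<in>V. \<forall>y\<in>V. entry (pCons 0 (A j)) x y = \<Gamma> j (gd x y)"
    by metis
  define p where "p i j = (if j \<le> diameter V E then nat \<lfloor>\<Gamma> j i\<rfloor> else 0)" for i j
  show ?thesis
    unfolding distance_regular_def
  proof (intro exI[of _ p] ballI allI)
    fix u x j
    assume u: "u \<in> V" and x: "x \<in> V"
    have nbrs_eq: "{y \<in> V. E x y \<and> gd u y = j} = nbrs x \<inter> {y. gd y u = j}"
      using u gdist_sym[of u] by (auto simp: nbrs_def)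
    show "card {y \<in> V. E x y \<and> gd u y = j} = p (gd u x) j"
    proof (cases "j \<le> diameter V E")
      case True
      have "real (card {y \<in> V. E x y \<and> gd u y = j}) = entry (pCons 0 (A j)) x u"
        using entry_pCons_0_dist_poly[OF A[OF True] u] nbrs_eq by simp
      also have "\<dots> = \<Gamma> j (gd u x)"
        using \<Gamma> x u gdist_sym by simp
      finally show ?thesis
        using True by (simp add: p_def flip: of_nat_eq_iff) (metis floor_of_nat nat_int)
    next
      case False
      then have "{y \<in> V. E x y \<and> gd u y = j} = {}"
        using gdist_le_diameter[OF u] by force
      then have "card {y \<in> V. E x y \<and> gd u y = j} = 0"
        by (metis card.empty)
      then show ?thesis
        using False by (simp add: p_def)
    qed
  qed
qed

lemma antipodal_equiv:
  assumes "\<And>u v w. u \<in> V \<Longrightarrow> v \<in> V \<Longrightarrow> w \<in> V \<Longrightarrow>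
      gd u v = diameter V E \<Longrightarrow> gd u w = diameter V E \<Longrightarrow> v = w"
  shows "equiv V {(x, y). x \<in> V \<and> y \<in> V \<and> (gd x y = 0 \<or> gd x y = diameter V E)}"
proof (rule equivI)
  show "trans {(x, y). x \<in> V \<and> y \<in> V \<and> (gd x y = 0 \<or> gd x y = diameter V E)}"
    using assms gdist_eq_0_iff gdist_sym by (auto simp: trans_def)
qed (auto simp: refl_on_def sym_def gdist_sym)

end

section \<open>Regular graphs and the Hoffman polynomial\<close>

locale reg_conn_sgraph = conn_sgraph +
  fixes k :: nat
  assumes regular: "x \<in> V \<Longrightarrow> card (nbrs x) = k"
begin

lemma degree_eigenvalue: "real k \<in> adj_eigenvalues V E"
proof -
  have "\<forall>x\<in>V. adj (\<lambda>_. 1) x = real k * 1"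
    using regular by (simp add: adj_def)
  then show ?thesis
    unfolding eigenvalue_iff_adj using V_nonempty by (intro exI[of _ "\<lambda>_. 1"]) auto
qed

lemma eigenvalue_le_degree:
  assumes "t \<in> adj_eigenvalues V E"
  shows "t \<le> k"
proof -
  obtain f where f: "\<exists>x\<in>V. f x \<noteq> 0" "\<forall>x\<in>V. adj f x = t * f x"
    using assms eigenvalue_iff_adj by blast
  obtain x0 where x0: "x0 \<in> V" "\<forall>y\<in>V. \<bar>f y\<bar> \<le> \<bar>f x0\<bar>"
    using finite_exists_max[OF finite_V V_nonempty, of "\<lambda>y. \<bar>f y\<bar>"] by blast
  have "\<bar>t\<bar> * \<bar>f x0\<bar> = \<bar>\<Sum>y\<in>nbrs x0. f y\<bar>"
    using f(2) x0(1) by (simp add: adj_def abs_mult)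
  also have "\<dots> \<le> (\<Sum>y\<in>nbrs x0. \<bar>f y\<bar>)"
    by (rule sum_abs)
  also have "\<dots> \<le> (\<Sum>y\<in>nbrs x0. \<bar>f x0\<bar>)"
    using x0(2) nbrs_subset_V by (intro sum_mono) auto
  also have "\<dots> = k * \<bar>f x0\<bar>"
    using regular x0(1) by simp
  finally have "\<bar>t\<bar> * \<bar>f x0\<bar> \<le> k * \<bar>f x0\<bar>" .
  moreover have "\<bar>f x0\<bar> > 0"
  proof -
    obtain x1 where "x1 \<in> V" "f x1 \<noteq> 0"
      using f(1) by blast
    then have "0 < \<bar>f x1\<bar>" "\<bar>f x1\<bar> \<le> \<bar>f x0\<bar>"
      using x0(2) by auto
    then show ?thesis by linarith
  qed
  ultimately have "\<bar>t\<bar> \<le> k"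
    by (rule mult_right_le_imp_le)
  then show ?thesis by simp
qed

text \<open>An eigenvector for the eigenvalue \<open>k\<close> is constant: at a maximum, all neighbours must attain the
  maximum too, and connectivity spreads this to every vertex.\<close>

lemma degree_eigenvector_const:
  assumes f: "\<forall>x\<in>V. adj f x = real k * f x" and "x \<in> V" and "y \<in> V"
  shows "f x = f y"
proof -
  obtain x0 where x0: "x0 \<in> V" "\<forall>y\<in>V. f y \<le> f x0"
    using finite_exists_max[OF finite_V V_nonempty, of f] by blast
  have step: "f z = f x0" if "f w = f x0" "E w z" for w z
  proof -
    have "w \<in> V" using edge_in_V that(2) by blast
    have "(\<Sum>y\<in>nbrs w. f x0 - f y) = real k * f x0 - adj f w"
      using regular[OF \<open>w \<in> V\<close>] by (simp add: adj_def sum_subtractf)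
    also have "\<dots> = 0"
      using f \<open>w \<in> V\<close> that(1) by simp
    finally have "\<forall>y\<in>nbrs w. f x0 - f y = 0"
      using x0(2) nbrs_subset_V by (subst sum_nonneg_eq_0_iff[symmetric]) auto
    then show ?thesis
      using that edge_in_V[OF that(2)] by (auto simp: nbrs_def)
  qed
  have "f w = f x0" if "w \<in> V" for w
  proof -
    have "(x0, w) \<in> (edge_rel V E)\<^sup>*"
      using connected x0(1) that by (simp add: connected_graph_def)
    then show ?thesis
      by (induction rule: rtrancl_induct) (auto simp: edge_rel_iff intro: step)
  qed
  then show ?thesis
    using assms(2,3) by simp
qed

definition hoffman_poly :: "real set \<Rightarrow> real poly" where
  "hoffman_poly S =
     smult (card V / (\<Prod>t\<in>S - {real k}. real k - t)) (\<Prod>t\<in>S - {real k}. [:-t, 1:])"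

text \<open>\<open>(A - k) H(A) = 0\<close>, so the columns of \<open>H(A)\<close> are eigenvectors for \<open>k\<close>, hence constant; as
  \<open>H(A)\<close> is symmetric, all its entries coincide.\<close>

lemma entries_hoffman_poly_eq:
  assumes S: "finite S" "adj_eigenvalues V E \<subseteq> S" and "x \<in> V" and "w \<in> V" and "z \<in> V"
  shows "entry (hoffman_poly S) w z = entry (hoffman_poly S) x x"
proof -
  define H where "H = hoffman_poly S"
  have vanishes: "\<forall>t\<in>S. poly ([:-real k, 1:] * H) t = 0"
    using S(1) by (auto simp: H_def hoffman_poly_def poly_prod intro: prod_zero)
  have "poly_adj [:-real k, 1:] (poly_adj H (delta z)) w = 0" if "w \<in> V" for z w
    using poly_adj_eq_0_if_vanishes_on_eigenvalues[OF S vanishes that, of "delta z"]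
    by (simp only: poly_adj_mult)
  then have column_const: "entry H w z = entry H w' z" if "w \<in> V" "w' \<in> V" for z w w'
    using that by (intro degree_eigenvector_const) (simp_all add: poly_adj_linear_root)
  have "entry H w z = entry H x z"
    using column_const[OF assms(4,3)] .
  also have "\<dots> = entry H z x"
    using entry_sym[OF assms(3,5)] .
  also have "\<dots> = entry H x x"
    using column_const[OF assms(5,3)] .
  finally show ?thesis
    by (simp add: H_def)
qed

lemma entry_hoffman_poly:
  assumes S: "finite S" "adj_eigenvalues V E \<subseteq> S" and "x \<in> V" and "y \<in> V"
  shows "entry (hoffman_poly S) x y = 1"
proof -
  define H where "H = hoffman_poly S"
  have "(\<Prod>t\<in>S - {real k}. real k - t) \<noteq> 0"
    using S(1) by simp
  then have "poly H (real k) = card V"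
    by (simp add: H_def hoffman_poly_def poly_prod)
  moreover have "poly_adj H (\<lambda>_. 1) x = poly H (real k) * 1"
    using regular \<open>x \<in> V\<close> by (intro poly_adj_eigenvector) (simp_all add: adj_def)
  moreover have "poly_adj H (\<lambda>_. 1) x = card V * entry H x x"
  proof -
    have "poly_adj H (\<lambda>_. 1) x = (\<Sum>z\<in>V. entry H x z * 1)"
      by (rule poly_adj_as_sum_entries[OF \<open>x \<in> V\<close>])
    also have "\<dots> = (\<Sum>z\<in>V. entry H x x)"
    proof (rule sum.cong)
      fix z
      assume "z \<in> V"
      then show "entry H x z * 1 = entry H x x"
        using entries_hoffman_poly_eq[OF S \<open>x \<in> V\<close> \<open>x \<in> V\<close> \<open>z \<in> V\<close>] by (simp add: H_def)
    qed simp
    finally show ?thesis by simp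
  qed
  ultimately have "entry H x x = 1"
    using finite_V V_nonempty by simp
  then show ?thesis
    using entries_hoffman_poly_eq[OF assms(1-3) assms(3,4)] by (simp add: H_def)
qed

end

section \<open>Spectrally extremal graphs attaining the bound\<close>

locale extremal_graph = reg_conn_sgraph +
  fixes n d :: nat and \<theta> :: "nat \<Rightarrow> real"
  assumes card_V: "card V = n"
    and diameter: "diameter V E = d"
    and \<theta>_decreasing: "\<And>i j. i < j \<Longrightarrow> j \<le> d \<Longrightarrow> \<theta> j < \<theta> i"
    and spectrum: "adj_eigenvalues V E = \<theta> ` {0..d}"
    and eccentricity_eq: "\<forall>u\<in>V. eccentricity V E u = d"
    and vertex_count: "real n * (\<Prod>s\<in>{1..d}. 1 / (\<theta> 0 - \<theta> s)) =
      (\<Sum>r\<in>{0..d}. (-1) ^ r * (\<Prod>s\<in>{0..d} - {r}. 1 / (\<theta> r - \<theta> s)))"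
begin

lemma inj_\<theta>: "inj_on \<theta> {0..d}"
  by (rule inj_onI) (metis \<theta>_decreasing atLeastAtMost_iff less_irrefl linorder_neqE_nat)

lemma \<theta>_neq: "r \<le> d \<Longrightarrow> s \<le> d \<Longrightarrow> r \<noteq> s \<Longrightarrow> \<theta> r \<noteq> \<theta> s"
  using inj_\<theta> by (auto simp: inj_on_def)

lemma \<theta>_0: "\<theta> 0 = real k"
proof -
  obtain r where "r \<le> d" "\<theta> r = real k"
    using degree_eigenvalue spectrum by auto
  moreover have "\<theta> 0 \<le> real k"
    using eigenvalue_le_degree spectrum by auto
  ultimately show ?thesis
    using \<theta>_decreasing[of 0 r] by (cases "r = 0") auto
qed

lemma poly_adj_eq_0_if_vanishes_on_spectrum:
  "\<forall>r\<le>d. poly p (\<theta> r) = 0 \<Longrightarrow> x \<in> V \<Longrightarrow> poly_adj p f x = 0"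
  using poly_adj_eq_0_if_vanishes_on_eigenvalues[of "\<theta> ` {0..d}"] spectrum by auto

lemma gdist_le_d: "x \<in> V \<Longrightarrow> y \<in> V \<Longrightarrow> gd x y \<le> d"
  using gdist_le_diameter diameter by simp

lemma exists_antipode: "u \<in> V \<Longrightarrow> \<exists>v\<in>V. gd u v = d"
proof -
  assume "u \<in> V"
  then have "d = Max (gd u ` V)"
    using eccentricity_eq by (simp add: eccentricity_def setcompr_eq_image)
  also have "\<dots> \<in> gd u ` V"
    using finite_V V_nonempty by (intro Max_in) auto
  finally show ?thesis by auto
qed

text \<open>Lagrange interpolation of \<open>(-1)\<^sup>r\<close> at the eigenvalues \<open>\<theta> r\<close>.\<close>

definition alt_poly :: "real poly" where
  "alt_poly = (\<Sum>r\<in>{0..d}. smult ((-1) ^ r * (\<Prod>s\<in>{0..d} - {r}. 1 / (\<theta> r - \<theta> s)))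
                                (\<Prod>s\<in>{0..d} - {r}. [:-\<theta> s, 1:]))"

lemma degree_alt_poly: "degree alt_poly \<le> d"
  unfolding alt_poly_def
  by (intro degree_sum_le order.trans[OF degree_smult_le]) (simp_all add: degree_prod_linear)

lemma coeff_alt_poly:
  "coeff alt_poly d = (\<Sum>r\<in>{0..d}. (-1) ^ r * (\<Prod>s\<in>{0..d} - {r}. 1 / (\<theta> r - \<theta> s)))"
proof -
  have "coeff (\<Prod>s\<in>{0..d} - {r}. [:-\<theta> s, 1:]) d = 1" if "r \<in> {0..d}" for r
    using coeff_prod_linear[of \<theta> "{0..d} - {r}"] that by simp
  then show ?thesis
    unfolding alt_poly_def coeff_sum by (intro sum.cong) auto
qed

lemma poly_alt_poly: "r \<le> d \<Longrightarrow> poly alt_poly (\<theta> r) = (-1) ^ r"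
proof -
  assume "r \<le> d"
  have "poly alt_poly (\<theta> r) = (\<Sum>r'\<in>{0..d}. if r' = r then (-1) ^ r else 0)"
    unfolding alt_poly_def poly_sum
  proof (intro sum.cong refl)
    fix r'
    assume "r' \<in> {0..d}"
    show "poly (smult ((-1) ^ r' * (\<Prod>s\<in>{0..d} - {r'}. 1 / (\<theta> r' - \<theta> s)))
        (\<Prod>s\<in>{0..d} - {r'}. [:-\<theta> s, 1:])) (\<theta> r) = (if r' = r then (-1) ^ r else 0)"
    proof (cases "r' = r")
      case True
      have "(\<Prod>s\<in>{0..d} - {r}. 1 / (\<theta> r - \<theta> s)) * (\<Prod>s\<in>{0..d} - {r}. \<theta> r - \<theta> s) = 1"
        using \<theta>_neq \<open>r \<le> d\<close> by (simp flip: prod.distrib)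
      then show ?thesis
        using True by (simp add: poly_prod)
    next
      case False
      then have "(\<Prod>s\<in>{0..d} - {r'}. \<theta> r - \<theta> s) = 0"
        using \<open>r \<le> d\<close> by (intro prod_zero) auto
      then show ?thesis
        using False by (simp add: poly_prod)
    qed
  qed
  also have "\<dots> = (-1) ^ r"
    using \<open>r \<le> d\<close> by simp
  finally show ?thesis .
qed

lemma hoffman_poly_spectrum:
  "hoffman_poly (\<theta> ` {0..d}) = smult (real n * (\<Prod>s\<in>{1..d}. 1 / (\<theta> 0 - \<theta> s))) (\<Prod>s\<in>{1..d}. [:-\<theta> s, 1:])"
proof -
  have "\<theta> 0 \<notin> \<theta> ` {1..d}"
    using \<theta>_neq[of 0] by fastforce
  moreover have "{0..d} = insert 0 {1..d}"
    by auto
  ultimately have "\<theta> ` {0..d} - {real k} = \<theta> ` {1..d}"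
    using \<theta>_0 by auto
  moreover have "inj_on \<theta> {1..d}"
    using inj_\<theta> by (rule inj_on_subset) auto
  ultimately show ?thesis
    by (simp add: hoffman_poly_def prod.reindex card_V \<theta>_0 prod_dividef)
qed

lemma entry_hoffman_poly_spectrum: "x \<in> V \<Longrightarrow> y \<in> V \<Longrightarrow> entry (hoffman_poly (\<theta> ` {0..d})) x y = 1"
  using entry_hoffman_poly spectrum by simp

text \<open>The vertex count hypothesis says exactly that \<open>alt_poly\<close> and the Hoffman polynomial have the same
  leading coefficient, so they agree on pairs at distance \<open>d\<close>.\<close>

lemma entry_alt_poly_at_distance_d:
  assumes "x \<in> V" and "y \<in> V" and "gd x y = d"
  shows "entry alt_poly x y = 1"
proof -
  let ?H = "hoffman_poly (\<theta> ` {0..d})"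
  have "degree ?H \<le> d"
    using degree_prod_linear[of \<theta> "{1..d}"]
    by (auto simp: hoffman_poly_spectrum intro: order.trans[OF degree_smult_le])
  moreover have "coeff ?H d = real n * (\<Prod>s\<in>{1..d}. 1 / (\<theta> 0 - \<theta> s))"
    using coeff_prod_linear[of \<theta> "{1..d}"] by (simp add: hoffman_poly_spectrum)
  then have "coeff ?H d = coeff alt_poly d"
    by (simp only: vertex_count coeff_alt_poly)
  ultimately have "\<forall>j\<ge>gd x y. coeff (alt_poly - ?H) j = 0"
    using degree_alt_poly assms(3) by (auto simp: coeff_eq_0 le_less)
  then have "entry (alt_poly - ?H) x y = 0"
    using entry_eq_coeff_walks[of x y "alt_poly - ?H"] by simp
  then show ?thesis
    using entry_hoffman_poly_spectrum[OF assms(1,2)] by (simp add: poly_adj_diff)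
qed

lemma sum_entry_alt_poly_squares: "u \<in> V \<Longrightarrow> (\<Sum>v\<in>V. (entry alt_poly u v)\<^sup>2) = 1"
proof -
  assume "u \<in> V"
  have "\<forall>r\<le>d. poly (alt_poly * alt_poly - 1) (\<theta> r) = 0"
    by (simp add: poly_alt_poly flip: power2_eq_square power_mult)
  then have "entry (alt_poly * alt_poly - 1) u u = 0"
    using poly_adj_eq_0_if_vanishes_on_spectrum \<open>u \<in> V\<close> by blast
  then have "1 = entry (alt_poly * alt_poly) u u"
    by (simp add: poly_adj_diff delta_def)
  also have "\<dots> = (\<Sum>v\<in>V. entry alt_poly u v * entry alt_poly v u)"
    unfolding poly_adj_mult by (rule poly_adj_as_sum_entries[OF \<open>u \<in> V\<close>])
  also have "\<dots> = (\<Sum>v\<in>V. (entry alt_poly u v)\<^sup>2)"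
    using entry_sym[OF _ \<open>u \<in> V\<close>, of _ alt_poly] by (intro sum.cong) (auto simp: power2_eq_square)
  finally show ?thesis by simp
qed

text \<open>A row of \<open>alt_poly(A)\<close> has unit norm and an entry \<open>1\<close> at every vertex at distance \<open>d\<close>, of
  which there is at least one: so there is exactly one, and the row is its indicator.\<close>

lemma unique_antipode:
  assumes "u \<in> V"
  obtains v0 where "v0 \<in> V" and "\<forall>v\<in>V. gd u v = d \<longleftrightarrow> v = v0"
    and "\<forall>v\<in>V. entry alt_poly u v = of_bool (v = v0)"
proof -
  obtain v0 where v0: "v0 \<in> V" "gd u v0 = d"
    using exists_antipode[OF assms] by blast
  have "entry alt_poly u v0 = 1"
    using entry_alt_poly_at_distance_d[OF assms v0] .
  moreover have "(\<Sum>v\<in>V. (entry alt_poly u v)\<^sup>2) = (entry alt_poly u v0)\<^sup>2 + (\<Sum>v\<in>V - {v0}. (entry alt_poly u v)\<^sup>2)"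
    using finite_V v0(1) by (simp add: sum.remove)
  ultimately have "(\<Sum>v\<in>V - {v0}. (entry alt_poly u v)\<^sup>2) = 0"
    using sum_entry_alt_poly_squares[OF assms] by simp
  then have "\<forall>v\<in>V - {v0}. entry alt_poly u v = 0"
    using sum_nonneg_eq_0_iff[of "V - {v0}" "\<lambda>v. (entry alt_poly u v)\<^sup>2"] finite_V by simp
  then have entries: "\<forall>v\<in>V. entry alt_poly u v = of_bool (v = v0)"
    using \<open>entry alt_poly u v0 = 1\<close> by auto
  moreover have "gd u v = d \<longleftrightarrow> v = v0" if "v \<in> V" for v
  proof
    assume "gd u v = d"
    then have "of_bool (v = v0) = (1::real)"
      using entry_alt_poly_at_distance_d[OF assms that] entries that by simp
    then show "v = v0" by simp
  qed (use v0(2) in simp)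
  ultimately show thesis
    using that[OF v0(1)] by blast
qed

lemma dist_poly_alt_poly: "dist_poly d alt_poly"
proof -
  have "entry alt_poly u v = of_bool (gd u v = d)" if uv: "u \<in> V" "v \<in> V" for u v
  proof -
    obtain v0 where "v0 \<in> V" "\<forall>v\<in>V. gd u v = d \<longleftrightarrow> v = v0"
        "\<forall>v\<in>V. entry alt_poly u v = of_bool (v = v0)"
      by (rule unique_antipode[OF uv(1)])
    then show ?thesis
      using uv(2) by simp
  qed
  then show ?thesis
    using degree_alt_poly by (simp add: dist_poly_def)
qed

definition spectrum_poly :: "real poly" where
  "spectrum_poly = (\<Prod>r\<in>{0..d}. [:-\<theta> r, 1:])"

lemma poly_spectrum_poly: "r \<le> d \<Longrightarrow> poly spectrum_poly (\<theta> r) = 0"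
  by (auto simp: spectrum_poly_def poly_prod intro: prod_zero)

lemma degree_spectrum_poly: "degree spectrum_poly = Suc d"
  and coeff_spectrum_poly: "coeff spectrum_poly (Suc d) = 1"
  using degree_prod_linear[of \<theta> "{0..d}"] coeff_prod_linear[of \<theta> "{0..d}"]
  by (simp_all add: spectrum_poly_def)

lemma dist_poly_spectrum_poly: "dist_poly (Suc d) spectrum_poly"
  unfolding dist_poly_def
proof (intro conjI ballI)
  fix x y
  assume "x \<in> V" "y \<in> V"
  then have "entry spectrum_poly x y = 0" "gd x y \<noteq> Suc d"
    using poly_adj_eq_0_if_vanishes_on_spectrum poly_spectrum_poly gdist_le_d[of x y] by auto
  then show "entry spectrum_poly x y = of_bool (gd x y = Suc d)"
    by simp
qed (simp add: degree_spectrum_poly)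

lemma ball_poly_hoffman_poly: "ball_poly d (hoffman_poly (\<theta> ` {0..d}))"
  using entry_hoffman_poly_spectrum gdist_le_d degree_prod_linear[of \<theta> "{1..d}"]
  by (auto simp: ball_poly_def hoffman_poly_spectrum intro: order.trans[OF degree_smult_le])

lemma exists_dist_poly: "i \<le> d \<Longrightarrow> \<exists>a. dist_poly i a"
  using exists_dist_poly_downward[OF dist_poly_alt_poly dist_poly_spectrum_poly _ ball_poly_hoffman_poly]
    coeff_spectrum_poly diameter by simp

lemma entries_depend_on_gdist_any_degree: "\<exists>\<gamma>. \<forall>x\<in>V. \<forall>y\<in>V. entry r x y = \<gamma> (gd x y)"
proof -
  have "spectrum_poly \<noteq> 0"
    using coeff_spectrum_poly by auto
  then have "degree (r mod spectrum_poly) \<le> d"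
    using degree_mod_less[of spectrum_poly r] degree_spectrum_poly by auto
  moreover have "\<forall>i\<le>diameter V E. \<exists>a. dist_poly i a"
    using exists_dist_poly diameter by simp
  ultimately obtain \<gamma> where \<gamma>: "\<forall>x\<in>V. \<forall>y\<in>V. entry (r mod spectrum_poly) x y = \<gamma> (gd x y)"
    using entries_depend_on_gdist[of d] diameter by blast
  have "entry r x y = entry (r mod spectrum_poly) x y" if "x \<in> V" for x y
  proof -
    have "entry r x y = entry (r mod spectrum_poly + spectrum_poly * (r div spectrum_poly)) x y"
      by simp
    also have "\<dots> = entry (r mod spectrum_poly) x y
        + poly_adj spectrum_poly (poly_adj (r div spectrum_poly) (delta y)) x"
      by (simp only: poly_adj_add poly_adj_mult)
    finally show ?thesis
      using poly_adj_eq_0_if_vanishes_on_spectrum[OF _ that] poly_spectrum_poly by simp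
  qed
  then show ?thesis
    using \<gamma> by auto
qed

theorem antipodal_distance_regular: "antipodal_drg V E"
  unfolding antipodal_drg_def
proof
  show "distance_regular V E"
    using distance_regular_if_dist_polys exists_dist_poly entries_depend_on_gdist_any_degree diameter
    by simp
  show "equiv V {(x, y). x \<in> V \<and> y \<in> V \<and> (gd x y = 0 \<or> gd x y = diameter V E)}"
  proof (rule antipodal_equiv)
    fix u v w
    assume "u \<in> V" "v \<in> V" "w \<in> V" "gd u v = diameter V E" "gd u w = diameter V E"
    moreover obtain v0 where "v0 \<in> V" "\<forall>v\<in>V. gd u v = d \<longleftrightarrow> v = v0"
        "\<forall>v\<in>V. entry alt_poly u v = of_bool (v = v0)"
      by (rule unique_antipode[OF \<open>u \<in> V\<close>])
    ultimately show "v = w"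
      using diameter by simp
  qed
qed

end

theorem corollary3p8:
  fixes V :: "'a set" and E :: "'a \<Rightarrow> 'a \<Rightarrow> bool"
    and n d :: nat and \<theta> :: "nat \<Rightarrow> real"
  assumes "simple_graph V E" and "connected_graph V E" and "regular_graph V E"
    and "spectrally_extremal V E"
    and "card V = n" and "diameter V E = d"
    and "\<And>i j. i < j \<Longrightarrow> j \<le> d \<Longrightarrow> \<theta> j < \<theta> i"
    and "adj_eigenvalues V E = \<theta> ` {0..d}"
    and "\<forall>u\<in>V. eccentricity V E u = d"
    and "real n * (\<Prod>s\<in>{1..d}. 1 / (\<theta> 0 - \<theta> s)) =
         (\<Sum>r\<in>{0..d}. (-1) ^ r * (\<Prod>s\<in>{0..d} - {r}. 1 / (\<theta> r - \<theta> s)))"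
  shows "antipodal_drg V E"
proof -
  obtain k where k: "\<forall>x\<in>V. card {y \<in> V. E x y} = k"
    using assms(3) unfolding regular_graph_def by blast
  interpret sgraph V E
    by unfold_locales (rule assms(1))
  interpret extremal_graph V E k n d \<theta>
    by unfold_locales (use assms k in \<open>simp_all add: nbrs_def\<close>)
  show ?thesis
    by (rule antipodal_distance_regular)
qed

end
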